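(* Let $p$ be a prime, $\zeta=\zeta_p$ a primitive $p$th root of unity, $t=1-\zeta$, and let $C_p$ be cyclic with generator $c$. The cyclic Wedderburn embedding $\omega_p\colon\mathbb{Z}[\zeta]C_p\to\prod_{j\in\mathbb{Z}/p}\mathbb{Z}[\zeta]$, $c\mapsto(\zeta^j)_{j}$, maps $\mathbb{Z}[\zeta]C_p$ isomorphically onto \[ W^{(1)}_p=\Bigl\{(y_j)_{j\in[0,p-1]}\in\prod_{j\in[0,p-1]}\mathbb{Z}[\zeta]\;\Bigm|\;\sum_{j\in[0,i]}(-1)^j\binom{i}{j}y_j\equiv0\pmod{t^i\mathbb{Z}[\zeta]}\ \text{for all }i\in[0,p-1]\Bigr\}. \]
   Context: The product $\prod_{j\in\mathbb{Z}/p}$ is identified with $\prod_{j\in[0,p-1]}$ in the obvious way. *)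

theory Defs
  imports Complex_Main "HOL-Computational_Algebra.Polynomial"
begin

definition Zring :: "complex \<Rightarrow> complex set" where
  "Zring \<zeta> = {poly (map_poly of_int f) \<zeta> | f :: int poly. True}"

definition cong0_ideal :: "complex \<Rightarrow> complex \<Rightarrow> complex \<Rightarrow> bool" where
  "cong0_ideal \<zeta> a y \<longleftrightarrow> (\<exists>z\<in>Zring \<zeta>. y = a * z)"

text \<open>The group ring Z[zeta]C_p: an element sum_{k<p} x_k c^k is represented by the
  coefficient function x (extended by 0 outside [0,p-1]).\<close>
definition grpring :: "nat \<Rightarrow> complex \<Rightarrow> (nat \<Rightarrow> complex) set" where
  "grpring p \<zeta> = {x. (\<forall>k<p. x k \<in> Zring \<zeta>) \<and> (\<forall>k\<ge>p. x k = 0)}"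

definition grp_add :: "(nat \<Rightarrow> complex) \<Rightarrow> (nat \<Rightarrow> complex) \<Rightarrow> nat \<Rightarrow> complex" where
  "grp_add x y = (\<lambda>k. x k + y k)"

text \<open>Multiplication in the group ring: c^k c^l = c^((k+l) mod p).\<close>
definition grp_mult :: "nat \<Rightarrow> (nat \<Rightarrow> complex) \<Rightarrow> (nat \<Rightarrow> complex) \<Rightarrow> nat \<Rightarrow> complex" where
  "grp_mult p x y = (\<lambda>m. if m < p then
      (\<Sum>k<p. \<Sum>l<p. if (k + l) mod p = m then x k * y l else 0) else 0)"

definition grp_one :: "nat \<Rightarrow> complex" where
  "grp_one = (\<lambda>k. if k = 0 then 1 else 0)"

definition prodring :: "nat \<Rightarrow> complex \<Rightarrow> (nat \<Rightarrow> complex) set" where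
  "prodring p \<zeta> = {y. (\<forall>j<p. y j \<in> Zring \<zeta>) \<and> (\<forall>j\<ge>p. y j = 0)}"

definition prod_one :: "nat \<Rightarrow> nat \<Rightarrow> complex" where
  "prod_one p = (\<lambda>j. if j < p then 1 else 0)"

definition omega :: "nat \<Rightarrow> complex \<Rightarrow> (nat \<Rightarrow> complex) \<Rightarrow> nat \<Rightarrow> complex" where
  "omega p \<zeta> x = (\<lambda>j. if j < p then (\<Sum>k<p. x k * \<zeta> ^ (j * k)) else 0)"

definition W1 :: "nat \<Rightarrow> complex \<Rightarrow> (nat \<Rightarrow> complex) set" where
  "W1 p \<zeta> = {y \<in> prodring p \<zeta>. \<forall>i<p.
      cong0_ideal \<zeta> ((1 - \<zeta>) ^ i) (\<Sum>j\<le>i. (-1) ^ j * of_nat (i choose j) * y j)}"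

end

theory Submission
  imports Defs "HOL-Number_Theory.Cong"
begin

text \<open>Since \<open>\<zeta>^p = 1\<close>, \<open>\<omega>\<close> is a ring homomorphism; it is injective by discrete
  Fourier inversion, the characters \<open>k \<mapsto> \<zeta>^(jk)\<close> being orthogonal for a primitive
  \<open>p\<close>-th root of unity. The \<open>i\<close>-th alternating binomial sum of \<open>\<omega>(\<Sum>k. x k c^k)\<close>
  equals \<open>\<Sum>k. x k (1 - \<zeta>^k)^i\<close>, which lies in \<open>t^i \<int>[\<zeta>]\<close> because \<open>t\<close> divides
  \<open>1 - \<zeta>^k\<close>; so the image lies in \<open>W1\<close>. Conversely, if \<open>y \<in> W1\<close> vanishes at all
  \<open>j < i\<close>, the \<open>i\<close>-th condition says \<open>y i \<in> t^i \<int>[\<zeta>]\<close>. The image of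
  \<open>\<Prod>m<i. c - \<zeta>^m\<close> also vanishes below \<open>i\<close>, and its \<open>i\<close>-th coordinate
  \<open>\<Prod>m<i. \<zeta>^i - \<zeta>^m\<close> is \<open>t^i\<close> times a unit, since \<open>(1 - \<zeta>^a)/(1 - \<zeta>)\<close> is a unit
  of \<open>\<int>[\<zeta>]\<close> when \<open>p\<close> does not divide \<open>a\<close>. Subtracting a suitable multiple clears the
  \<open>i\<close>-th coordinate, so induction on \<open>i\<close> puts \<open>y\<close> in the image.\<close>

lemma power_mod_of_power_eq_1:
  fixes z :: "'a::monoid_mult"
  assumes "z ^ p = 1"
  shows "z ^ (n mod p) = z ^ n"
proof -
  have "z ^ n = z ^ (p * (n div p) + n mod p)"
    by simp
  also have "\<dots> = (z ^ p) ^ (n div p) * z ^ (n mod p)"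
    by (simp only: power_add power_mult)
  finally show ?thesis
    using assms by simp
qed

lemma sum_powers_primitive_root:
  fixes \<zeta> :: "'a::idom"
  assumes "\<zeta> ^ p = 1" and "\<forall>k\<in>{1..<p}. \<zeta> ^ k \<noteq> 1"
  shows "(\<Sum>j<p. (\<zeta> ^ n) ^ j) = (if p dvd n then of_nat p else 0)"
proof (cases "p dvd n")
  case True
  then have "\<zeta> ^ n = 1"
    using power_mod_of_power_eq_1[OF assms(1), of n] by simp
  then show ?thesis
    using True by simp
next
  case False
  show ?thesis
  proof (cases "p = 0")
    case False
    with \<open>\<not> p dvd n\<close> have "n mod p \<in> {1..<p}"
      by (simp add: dvd_eq_mod_eq_0 Suc_le_eq)
    then have "\<zeta> ^ n \<noteq> 1"
      using assms power_mod_of_power_eq_1[OF assms(1), of n] by metis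
    moreover have "(1 - \<zeta> ^ n) * (\<Sum>j<p. (\<zeta> ^ n) ^ j) = 1 - (\<zeta> ^ n) ^ p"
      by (rule one_diff_power_eq[symmetric])
    moreover have "(\<zeta> ^ n) ^ p = 1"
      using assms(1) by (metis power_mult mult.commute power_one)
    ultimately show ?thesis
      using assms(1) \<open>\<not> p dvd n\<close> by simp
  qed simp
qed

lemma dvd_add_diff_iff_eq:
  fixes p k l :: nat
  assumes "k < p" "l < p"
  shows "p dvd l + p - k \<longleftrightarrow> l = k"
proof
  assume "p dvd l + p - k"
  then obtain q where q: "l + p - k = p * q"
    by (auto simp: dvd_def)
  with assms have "0 < p * q" "p * q < p * 2"
    by linarith+
  then have "q = 1"
    by simp
  with q assms show "l = k"
    by simp
qed (use assms in simp)

lemma power_diff_factor: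
  fixes z :: "'a::comm_ring_1"
  assumes "m \<le> i"
  shows "z ^ i - z ^ m = (1 - z) * - (z ^ m * (\<Sum>l<i - m. z ^ l))"
proof -
  have "z ^ i - z ^ m = - (z ^ m * (1 - z ^ (i - m)))"
    using assms by (simp add: algebra_simps flip: power_add)
  then show ?thesis
    by (subst (asm) one_diff_power_eq) (simp add: algebra_simps)
qed

lemma map_poly_of_int_add:
  "map_poly (of_int :: int \<Rightarrow> 'a::comm_ring_1) (f + g) = map_poly of_int f + map_poly of_int g"
  by (rule poly_eqI) (simp add: coeff_map_poly)

lemma map_poly_of_int_mult:
  "map_poly (of_int :: int \<Rightarrow> 'a::comm_ring_1) (f * g) = map_poly of_int f * map_poly of_int g"
  by (rule poly_eqI) (simp add: coeff_map_poly coeff_mult)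

lemma map_poly_of_int_uminus:
  "map_poly (of_int :: int \<Rightarrow> 'a::comm_ring_1) (- f) = - map_poly of_int f"
  by (rule poly_eqI) (simp add: coeff_map_poly)

lemma Zring_add: "a \<in> Zring \<zeta> \<Longrightarrow> b \<in> Zring \<zeta> \<Longrightarrow> a + b \<in> Zring \<zeta>"
  unfolding Zring_def by clarsimp (metis map_poly_of_int_add poly_add)

lemma Zring_mult: "a \<in> Zring \<zeta> \<Longrightarrow> b \<in> Zring \<zeta> \<Longrightarrow> a * b \<in> Zring \<zeta>"
  unfolding Zring_def by clarsimp (metis map_poly_of_int_mult poly_mult)

lemma Zring_uminus: "a \<in> Zring \<zeta> \<Longrightarrow> - a \<in> Zring \<zeta>"
  unfolding Zring_def by clarsimp (metis map_poly_of_int_uminus poly_minus)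

lemma Zring_diff: "a \<in> Zring \<zeta> \<Longrightarrow> b \<in> Zring \<zeta> \<Longrightarrow> a - b \<in> Zring \<zeta>"
  using Zring_add[of a \<zeta> "- b"] Zring_uminus[of b \<zeta>] by simp

lemma Zring_of_int: "of_int k \<in> Zring \<zeta>"
  unfolding Zring_def by (auto intro!: exI[of _ "[:k:]"] simp: map_poly_pCons)

lemma Zring_0: "0 \<in> Zring \<zeta>"
  using Zring_of_int[of 0 \<zeta>] by simp

lemma Zring_1: "1 \<in> Zring \<zeta>"
  using Zring_of_int[of 1 \<zeta>] by simp

lemma Zring_generator: "\<zeta> \<in> Zring \<zeta>"
  unfolding Zring_def by (auto intro!: exI[of _ "[:0, 1:]"] simp: map_poly_pCons)

lemma Zring_power: "a \<in> Zring \<zeta> \<Longrightarrow> a ^ n \<in> Zring \<zeta>"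
  by (induction n) (auto intro: Zring_1 Zring_mult)

lemma Zring_generator_power: "\<zeta> ^ n \<in> Zring \<zeta>"
  by (intro Zring_power Zring_generator)

lemma Zring_sum: "(\<And>i. i \<in> A \<Longrightarrow> f i \<in> Zring \<zeta>) \<Longrightarrow> sum f A \<in> Zring \<zeta>"
  by (induction A rule: infinite_finite_induct) (auto intro: Zring_0 Zring_add)

lemma cong0_ideal_diff:
  "cong0_ideal \<zeta> a u \<Longrightarrow> cong0_ideal \<zeta> a v \<Longrightarrow> cong0_ideal \<zeta> a (u - v)"
  unfolding cong0_ideal_def by (metis Zring_diff right_diff_distrib)

definition Zring_unit :: "complex \<Rightarrow> complex \<Rightarrow> bool" where
  "Zring_unit \<zeta> u \<longleftrightarrow> u \<in> Zring \<zeta> \<and> (\<exists>v\<in>Zring \<zeta>. u * v = 1)"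

lemma Zring_unit_mult: "Zring_unit \<zeta> u \<Longrightarrow> Zring_unit \<zeta> v \<Longrightarrow> Zring_unit \<zeta> (u * v)"
  unfolding Zring_unit_def by (metis Zring_mult mult.left_commute mult_1_right)

lemma Zring_unit_1: "Zring_unit \<zeta> 1"
  unfolding Zring_unit_def using Zring_1 by auto

lemma Zring_unit_prod: "(\<And>i. i \<in> A \<Longrightarrow> Zring_unit \<zeta> (f i)) \<Longrightarrow> Zring_unit \<zeta> (prod f A)"
  by (induction A rule: infinite_finite_induct) (auto intro: Zring_unit_1 Zring_unit_mult)

lemma Zring_unit_uminus: "Zring_unit \<zeta> u \<Longrightarrow> Zring_unit \<zeta> (- u)"
  unfolding Zring_unit_def by (metis Zring_uminus minus_mult_minus)

lemma Zring_unit_generator_power: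
  assumes "\<zeta> ^ p = 1" "0 < p"
  shows "Zring_unit \<zeta> (\<zeta> ^ m)"
proof -
  have "\<zeta> ^ m * \<zeta> ^ ((p - 1) * m) = (\<zeta> ^ p) ^ m"
    using assms(2) by (simp flip: power_add power_mult add: algebra_simps)
  then show ?thesis
    using assms(1) unfolding Zring_unit_def by (auto intro: Zring_generator_power)
qed

definition grp_gen :: "nat \<Rightarrow> complex" where
  "grp_gen = (\<lambda>k. if k = 1 then 1 else 0)"

lemma grpring_zero: "(\<lambda>_. 0) \<in> grpring p \<zeta>"
  by (simp add: grpring_def Zring_0)

lemma grpring_add: "x \<in> grpring p \<zeta> \<Longrightarrow> y \<in> grpring p \<zeta> \<Longrightarrow> grp_add x y \<in> grpring p \<zeta>"
  by (simp add: grpring_def grp_add_def Zring_add)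

lemma grpring_scale: "a \<in> Zring \<zeta> \<Longrightarrow> x \<in> grpring p \<zeta> \<Longrightarrow> (\<lambda>k. a * x k) \<in> grpring p \<zeta>"
  by (simp add: grpring_def Zring_mult)

lemma grpring_mult: "x \<in> grpring p \<zeta> \<Longrightarrow> y \<in> grpring p \<zeta> \<Longrightarrow> grp_mult p x y \<in> grpring p \<zeta>"
  unfolding grpring_def grp_mult_def by (auto intro!: Zring_sum Zring_mult Zring_0)

lemma grpring_one: "0 < p \<Longrightarrow> grp_one \<in> grpring p \<zeta>"
  by (simp add: grpring_def grp_one_def Zring_0 Zring_1)

lemma grpring_gen: "1 < p \<Longrightarrow> grp_gen \<in> grpring p \<zeta>"
  by (simp add: grpring_def grp_gen_def Zring_0 Zring_1)

lemma omega_zero: "omega p \<zeta> (\<lambda>_. 0) = (\<lambda>_. 0)"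
  by (simp add: omega_def fun_eq_iff)

lemma omega_add: "omega p \<zeta> (grp_add x y) = (\<lambda>j. omega p \<zeta> x j + omega p \<zeta> y j)"
  by (simp add: omega_def grp_add_def sum.distrib distrib_right fun_eq_iff)

lemma omega_scale: "omega p \<zeta> (\<lambda>k. a * x k) = (\<lambda>j. a * omega p \<zeta> x j)"
  by (simp add: omega_def sum_distrib_left mult.assoc fun_eq_iff)

lemma omega_one: "0 < p \<Longrightarrow> omega p \<zeta> grp_one = prod_one p"
  by (simp add: omega_def prod_one_def grp_one_def fun_eq_iff if_distrib if_distribR cong: if_cong)

lemma omega_gen: "1 < p \<Longrightarrow> j < p \<Longrightarrow> omega p \<zeta> grp_gen j = \<zeta> ^ j"
  by (simp add: omega_def grp_gen_def if_distrib if_distribR cong: if_cong)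

lemma omega_in_prodring: "x \<in> grpring p \<zeta> \<Longrightarrow> omega p \<zeta> x \<in> prodring p \<zeta>"
  unfolding prodring_def grpring_def omega_def
  by (auto intro!: Zring_sum Zring_mult Zring_generator_power)

lemma omega_mult:
  assumes "\<zeta> ^ p = 1"
  shows "omega p \<zeta> (grp_mult p x y) = (\<lambda>j. omega p \<zeta> x j * omega p \<zeta> y j)"
proof
  fix j
  have reduce: "\<zeta> ^ (j * ((k + l) mod p)) = \<zeta> ^ (j * k) * \<zeta> ^ (j * l)" for k l
  proof -
    have "(\<zeta> ^ j) ^ p = 1"
      using assms by (metis power_mult mult.commute power_one)
    then have "(\<zeta> ^ j) ^ ((k + l) mod p) = (\<zeta> ^ j) ^ (k + l)"
      by (rule power_mod_of_power_eq_1)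
    then show ?thesis
      by (metis power_add power_mult)
  qed
  show "omega p \<zeta> (grp_mult p x y) j = omega p \<zeta> x j * omega p \<zeta> y j"
  proof (cases "j < p")
    case True
    have "omega p \<zeta> (grp_mult p x y) j =
        (\<Sum>m<p. \<Sum>k<p. \<Sum>l<p. if (k + l) mod p = m then x k * y l * \<zeta> ^ (j * m) else 0)"
      using True unfolding omega_def grp_mult_def
      by (simp add: sum_distrib_right if_distrib[where f = "\<lambda>v. v * c" for c] cong: if_cong)
    also have "\<dots> = (\<Sum>k<p. \<Sum>l<p. \<Sum>m<p. if (k + l) mod p = m then x k * y l * \<zeta> ^ (j * m) else 0)"
      by (subst sum.swap, subst (2) sum.swap, rule refl)
    also have "\<dots> = (\<Sum>k<p. \<Sum>l<p. x k * y l * \<zeta> ^ (j * ((k + l) mod p)))"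
      using True by (simp add: sum.delta)
    also have "\<dots> = (\<Sum>k<p. \<Sum>l<p. (x k * \<zeta> ^ (j * k)) * (y l * \<zeta> ^ (j * l)))"
      by (simp add: reduce mult_ac)
    also have "\<dots> = omega p \<zeta> x j * omega p \<zeta> y j"
      using True by (simp add: omega_def sum_product)
    finally show ?thesis .
  qed (simp add: omega_def)
qed

lemma omega_inversion:
  assumes "\<zeta> ^ p = 1" and "\<forall>k\<in>{1..<p}. \<zeta> ^ k \<noteq> 1" and "k < p"
  shows "(\<Sum>j<p. \<zeta> ^ (j * (p - k)) * omega p \<zeta> x j) = of_nat p * x k"
  \<comment> \<open>\<open>\<zeta>^(p - k)\<close> stands for \<open>\<zeta>^-k\<close>: this is the inverse discrete Fourier transform\<close>
proof -
  have "(\<Sum>j<p. \<zeta> ^ (j * (p - k)) * omega p \<zeta> x j) =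
      (\<Sum>j<p. \<Sum>l<p. x l * (\<zeta> ^ (l + (p - k))) ^ j)"
    by (intro sum.cong) (simp_all add: omega_def sum_distrib_left algebra_simps
        flip: power_add power_mult)
  also have "\<dots> = (\<Sum>l<p. x l * (\<Sum>j<p. (\<zeta> ^ (l + (p - k))) ^ j))"
    by (subst sum.swap) (simp add: sum_distrib_left)
  also have "\<dots> = (\<Sum>l<p. if l = k then of_nat p * x l else 0)"
    using assms by (intro sum.cong) (simp_all add: sum_powers_primitive_root dvd_add_diff_iff_eq)
  also have "\<dots> = of_nat p * x k"
    using assms(3) by simp
  finally show ?thesis .
qed

lemma omega_inj_on:
  assumes "\<zeta> ^ p = 1" and "\<forall>k\<in>{1..<p}. \<zeta> ^ k \<noteq> 1"
  shows "inj_on (omega p \<zeta>) (grpring p \<zeta>)"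
proof (rule inj_onI)
  fix x y
  assume "x \<in> grpring p \<zeta>" "y \<in> grpring p \<zeta>" and eq: "omega p \<zeta> x = omega p \<zeta> y"
  have "x k = y k" if "k < p" for k
    using omega_inversion[OF assms that, of x] omega_inversion[OF assms that, of y] eq that
    by simp
  moreover have "x k = y k" if "p \<le> k" for k
    using \<open>x \<in> grpring p \<zeta>\<close> \<open>y \<in> grpring p \<zeta>\<close> that by (simp add: grpring_def)
  ultimately show "x = y"
    by (meson ext not_le)
qed

lemma alternating_binomial_sum_omega:
  assumes "i < p"
  shows "(\<Sum>j\<le>i. (-1) ^ j * of_nat (i choose j) * omega p \<zeta> x j) = (\<Sum>k<p. x k * (1 - \<zeta> ^ k) ^ i)"
proof -
  have summand: "(-1) ^ j * of_nat (i choose j) * (x k * \<zeta> ^ (j * k)) =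
      x k * (of_nat (i choose j) * (- (\<zeta> ^ k)) ^ j * 1 ^ (i - j))" for j k
    by (simp add: power_minus[of "\<zeta> ^ k" j] mult.commute mult.left_commute flip: power_mult)
  have "(\<Sum>j\<le>i. (-1) ^ j * of_nat (i choose j) * omega p \<zeta> x j) =
      (\<Sum>j\<le>i. \<Sum>k<p. x k * (of_nat (i choose j) * (- (\<zeta> ^ k)) ^ j * 1 ^ (i - j)))"
    using assms by (intro sum.cong) (simp_all add: omega_def sum_distrib_left summand)
  also have "\<dots> = (\<Sum>k<p. x k * (\<Sum>j\<le>i. of_nat (i choose j) * (- (\<zeta> ^ k)) ^ j * 1 ^ (i - j)))"
    by (subst sum.swap) (simp add: sum_distrib_left)
  also have "\<dots> = (\<Sum>k<p. x k * (- (\<zeta> ^ k) + 1) ^ i)"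
    by (simp only: binomial_ring)
  finally show ?thesis
    by simp
qed

lemma omega_in_W1:
  assumes "x \<in> grpring p \<zeta>"
  shows "omega p \<zeta> x \<in> W1 p \<zeta>"
proof -
  have "cong0_ideal \<zeta> ((1 - \<zeta>) ^ i) (\<Sum>j\<le>i. (-1) ^ j * of_nat (i choose j) * omega p \<zeta> x j)"
    if "i < p" for i
  proof -
    have "(\<Sum>j\<le>i. (-1) ^ j * of_nat (i choose j) * omega p \<zeta> x j) =
        (\<Sum>k<p. (1 - \<zeta>) ^ i * (x k * (\<Sum>l<k. \<zeta> ^ l) ^ i))"
      unfolding alternating_binomial_sum_omega[OF that]
      by (intro sum.cong refl) (simp only: one_diff_power_eq power_mult_distrib mult_ac)
    also have "\<dots> = (1 - \<zeta>) ^ i * (\<Sum>k<p. x k * (\<Sum>l<k. \<zeta> ^ l) ^ i)"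
      by (rule sum_distrib_left[symmetric])
    finally have "(\<Sum>j\<le>i. (-1) ^ j * of_nat (i choose j) * omega p \<zeta> x j) =
        (1 - \<zeta>) ^ i * (\<Sum>k<p. x k * (\<Sum>l<k. \<zeta> ^ l) ^ i)" .
    moreover have "(\<Sum>k<p. x k * (\<Sum>l<k. \<zeta> ^ l) ^ i) \<in> Zring \<zeta>"
      using assms by (auto simp: grpring_def intro!: Zring_sum Zring_mult Zring_power
          Zring_generator_power)
    ultimately show ?thesis
      unfolding cong0_ideal_def by blast
  qed
  then show ?thesis
    using omega_in_prodring[OF assms] by (simp add: W1_def)
qed

lemma W1_diff:
  assumes "y \<in> W1 p \<zeta>" "y' \<in> W1 p \<zeta>"
  shows "(\<lambda>j. y j - y' j) \<in> W1 p \<zeta>"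
proof -
  have "(\<Sum>j\<le>i. (-1) ^ j * of_nat (i choose j) * (y j - y' j)) =
        (\<Sum>j\<le>i. (-1) ^ j * of_nat (i choose j) * y j) - (\<Sum>j\<le>i. (-1) ^ j * of_nat (i choose j) * y' j)"
    for i by (simp add: right_diff_distrib sum_subtractf)
  with assms show ?thesis
    by (auto simp: W1_def prodring_def intro: Zring_diff cong0_ideal_diff)
qed

lemma W1_leading_coordinate_divisible:
  assumes "y \<in> W1 p \<zeta>" "i < p" "\<forall>j<i. y j = 0"
  shows "\<exists>w\<in>Zring \<zeta>. y i = (1 - \<zeta>) ^ i * w"
proof -
  have "cong0_ideal \<zeta> ((1 - \<zeta>) ^ i) (\<Sum>j\<le>i. (-1) ^ j * of_nat (i choose j) * y j)"
    using assms(1,2) by (simp add: W1_def)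
  moreover have "(\<Sum>j\<le>i. (-1) ^ j * of_nat (i choose j) * y j) = (-1) ^ i * y i"
    using assms(3) by (simp add: lessThan_Suc_atMost[symmetric])
  ultimately obtain z where "z \<in> Zring \<zeta>" "(-1) ^ i * y i = (1 - \<zeta>) ^ i * z"
    unfolding cong0_ideal_def by auto
  then have "y i = (1 - \<zeta>) ^ i * ((-1) ^ i * z)"
    by (metis left_minus_one_mult_self mult.left_commute)
  moreover have "(-1) ^ i * z \<in> Zring \<zeta>"
    using \<open>z \<in> Zring \<zeta>\<close> by (intro Zring_mult Zring_power Zring_uminus Zring_1)
  ultimately show ?thesis
    by blast
qed

lemma omega_image_prod_power_diff:
  assumes "\<zeta> ^ p = 1" and "1 < p"
  shows "\<exists>g\<in>grpring p \<zeta>. \<forall>j<p. omega p \<zeta> g j = (\<Prod>m<i. \<zeta> ^ j - \<zeta> ^ m)"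
proof (induction i)
  case 0
  show ?case
    using assms(2) by (intro bexI[of _ grp_one]) (simp_all add: omega_one prod_one_def grpring_one)
next
  case (Suc i)
  then obtain g where g: "g \<in> grpring p \<zeta>" "\<forall>j<p. omega p \<zeta> g j = (\<Prod>m<i. \<zeta> ^ j - \<zeta> ^ m)"
    by blast
  define h where "h = grp_add grp_gen (\<lambda>k. - (\<zeta> ^ i) * grp_one k)"
  have "h \<in> grpring p \<zeta>"
    unfolding h_def using assms(2)
    by (intro grpring_add grpring_gen grpring_scale grpring_one Zring_uminus Zring_generator_power) auto
  moreover have "omega p \<zeta> h j = \<zeta> ^ j - \<zeta> ^ i" if "j < p" for j
    using that assms(2) unfolding h_def omega_add omega_scale
    by (simp add: omega_gen omega_one prod_one_def)
  ultimately show ?case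
    using g assms by (intro bexI[of _ "grp_mult p g h"]) (simp_all add: omega_mult grpring_mult)
qed

context
  fixes p :: nat and \<zeta> :: complex
  assumes prime: "prime p" and root: "\<zeta> ^ p = 1" and nontrivial: "\<zeta> \<noteq> 1"
begin

lemma Zring_unit_sum_powers:
  assumes "1 \<le> a" "a < p"
  shows "Zring_unit \<zeta> (\<Sum>l<a. \<zeta> ^ l)"
proof -
  have "\<not> p dvd a"
    using assms nat_dvd_not_less[of a p] by simp
  then have "coprime a p"
    using prime_imp_coprime_nat[OF prime] coprime_commute by blast
  then obtain b where "[a * b = 1] (mod p)"
    using cong_solve_coprime_nat by auto
  then have "\<zeta> ^ (a * b) = \<zeta>"
    using power_mod_of_power_eq_1[OF root] by (metis cong_def power_one_right)
  define r where "r = (\<Sum>l<b. (\<zeta> ^ a) ^ l)"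
  have "(1 - \<zeta>) * ((\<Sum>l<a. \<zeta> ^ l) * r) = (1 - \<zeta> ^ a) * r"
    by (simp add: one_diff_power_eq)
  also have "\<dots> = 1 - (\<zeta> ^ a) ^ b"
    unfolding r_def by (rule one_diff_power_eq[symmetric])
  also have "\<dots> = 1 - \<zeta>"
    using \<open>\<zeta> ^ (a * b) = \<zeta>\<close> by (simp add: power_mult)
  finally have "(\<Sum>l<a. \<zeta> ^ l) * r = 1"
    using nontrivial by simp
  moreover have "r \<in> Zring \<zeta>" "(\<Sum>l<a. \<zeta> ^ l) \<in> Zring \<zeta>"
    unfolding r_def by (auto intro!: Zring_sum Zring_power Zring_generator_power)
  ultimately show ?thesis
    unfolding Zring_unit_def by blast
qed

lemma prod_power_diff_eq_unit:
  assumes "i < p"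
  shows "\<exists>u. Zring_unit \<zeta> u \<and> (\<Prod>m<i. \<zeta> ^ i - \<zeta> ^ m) = (1 - \<zeta>) ^ i * u"
proof -
  define f where "f m = - (\<zeta> ^ m * (\<Sum>l<i - m. \<zeta> ^ l))" for m
  have "(\<Prod>m<i. \<zeta> ^ i - \<zeta> ^ m) = (\<Prod>m<i. (1 - \<zeta>) * f m)"
    unfolding f_def by (intro prod.cong) (simp_all add: power_diff_factor)
  also have "\<dots> = (1 - \<zeta>) ^ i * prod f {..<i}"
    by (simp add: prod.distrib)
  finally have "(\<Prod>m<i. \<zeta> ^ i - \<zeta> ^ m) = (1 - \<zeta>) ^ i * prod f {..<i}" .
  moreover have "Zring_unit \<zeta> (prod f {..<i})"
    unfolding f_def using assms prime_gt_0_nat[OF prime]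
    by (intro Zring_unit_prod Zring_unit_uminus Zring_unit_mult Zring_unit_sum_powers
        Zring_unit_generator_power[OF root]) auto
  ultimately show ?thesis
    by blast
qed

lemma omega_image_leading_coordinate:
  assumes "i < p" "w \<in> Zring \<zeta>"
  shows "\<exists>h\<in>grpring p \<zeta>. (\<forall>j<i. omega p \<zeta> h j = 0) \<and> omega p \<zeta> h i = (1 - \<zeta>) ^ i * w"
proof -
  obtain g where g: "g \<in> grpring p \<zeta>" "\<forall>j<p. omega p \<zeta> g j = (\<Prod>m<i. \<zeta> ^ j - \<zeta> ^ m)"
    using omega_image_prod_power_diff[OF root] prime_gt_1_nat[OF prime] by blast
  obtain u v where "u * v = 1" "v \<in> Zring \<zeta>" "(\<Prod>m<i. \<zeta> ^ i - \<zeta> ^ m) = (1 - \<zeta>) ^ i * u"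
    using prod_power_diff_eq_unit[OF assms(1)] unfolding Zring_unit_def by blast
  define h where "h = (\<lambda>k. v * w * g k)"
  have "h \<in> grpring p \<zeta>"
    unfolding h_def using g(1) \<open>v \<in> Zring \<zeta>\<close> assms(2) by (intro grpring_scale Zring_mult)
  moreover have "omega p \<zeta> h j = 0" if "j < i" for j
    using g(2) that assms(1) by (auto simp: h_def omega_scale)
  moreover have "omega p \<zeta> h i = (1 - \<zeta>) ^ i * w"
    using g(2) assms(1) \<open>u * v = 1\<close> \<open>(\<Prod>m<i. \<zeta> ^ i - \<zeta> ^ m) = (1 - \<zeta>) ^ i * u\<close>
    by (simp add: h_def omega_scale algebra_simps)
  ultimately show ?thesis
    by blast
qed

lemma W1_subset_omega_image: "W1 p \<zeta> \<subseteq> omega p \<zeta> ` grpring p \<zeta>"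
proof -
  have "\<forall>y\<in>W1 p \<zeta>. (\<forall>j<i. y j = 0) \<longrightarrow> y \<in> omega p \<zeta> ` grpring p \<zeta>" if "i \<le> p" for i
    using that
  proof (induction i rule: inc_induct)
    case base
    have "y = omega p \<zeta> (\<lambda>_. 0)" if "y \<in> W1 p \<zeta>" "\<forall>j<p. y j = 0" for y
      using that by (auto simp: omega_zero W1_def prodring_def fun_eq_iff not_less[symmetric])
    then show ?case
      using grpring_zero by blast
  next
    case (step i)
    show ?case
    proof (intro ballI impI)
      fix y assume y: "y \<in> W1 p \<zeta>" and vanish: "\<forall>j<i. y j = 0"
      obtain w where "w \<in> Zring \<zeta>" "y i = (1 - \<zeta>) ^ i * w"
        using W1_leading_coordinate_divisible[OF y step.hyps(2) vanish] by blast
      then obtain h where h: "h \<in> grpring p \<zeta>" "\<forall>j<i. omega p \<zeta> h j = 0" "omega p \<zeta> h i = y i"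
        using omega_image_leading_coordinate[OF step.hyps(2)] by metis
      have "(\<lambda>j. y j - omega p \<zeta> h j) \<in> omega p \<zeta> ` grpring p \<zeta>"
        using step.IH W1_diff[OF y omega_in_W1[OF h(1)]] vanish h(2,3) less_Suc_eq by auto
      then obtain x where x: "x \<in> grpring p \<zeta>" "(\<lambda>j. y j - omega p \<zeta> h j) = omega p \<zeta> x"
        by blast
      then have "y = omega p \<zeta> (grp_add x h)"
        by (simp add: omega_add fun_eq_iff) (metis diff_add_cancel)
      then show "y \<in> omega p \<zeta> ` grpring p \<zeta>"
        using x(1) h(1) grpring_add by blast
    qed
  qed
  then show ?thesis
    by blast
qed

end

theorem proposition3p19:
  fixes p :: nat and \<zeta> :: complex
  assumes "prime p"
    and "\<zeta> ^ p = 1" and "\<forall>k\<in>{1..<p}. \<zeta> ^ k \<noteq> 1"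
  shows "(\<forall>x\<in>grpring p \<zeta>. omega p \<zeta> x \<in> prodring p \<zeta>)
    \<and> (\<forall>x\<in>grpring p \<zeta>. \<forall>y\<in>grpring p \<zeta>.
          omega p \<zeta> (grp_add x y) = (\<lambda>j. omega p \<zeta> x j + omega p \<zeta> y j))
    \<and> (\<forall>x\<in>grpring p \<zeta>. \<forall>y\<in>grpring p \<zeta>.
          omega p \<zeta> (grp_mult p x y) = (\<lambda>j. omega p \<zeta> x j * omega p \<zeta> y j))
    \<and> omega p \<zeta> grp_one = prod_one p
    \<and> bij_betw (omega p \<zeta>) (grpring p \<zeta>) (W1 p \<zeta>)"
proof -
  have "1 < p"
    using assms(1) by (rule prime_gt_1_nat)
  then have "\<zeta> \<noteq> 1"
    using assms(3) by force
  have "bij_betw (omega p \<zeta>) (grpring p \<zeta>) (W1 p \<zeta>)"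
    unfolding bij_betw_def
    using omega_inj_on[OF assms(2,3)] omega_in_W1 W1_subset_omega_image[OF assms(1,2) \<open>\<zeta> \<noteq> 1\<close>]
    by blast
  then show ?thesis
    using \<open>1 < p\<close> by (simp add: omega_in_prodring omega_add omega_mult[OF assms(2)] omega_one)
qed

end
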